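(* Let $A=\mathbb C\langle u^{\pm1},v^{\pm1}\rangle$ and $h=u+v+u^{-1}+v^{-1}+u^{-1}v^{-1}$. The elements $\pi(h^k)$, $k=1,2,3,\dots$, of $A/[A,A]$ are linearly independent over $\mathbb C$.
   Context: $A$ is the group algebra over $\mathbb C$ of the free group on two generators $u,v$; $[A,A]$ is the linear span of all $ab-ba$, $a,b\in A$; $\pi:A\to A/[A,A]$ is the natural projection. *)

theory Defs
  imports Complex_Main
begin

text \<open>Free group on two generators u, v as reduced words. A letter is a pair
 (generator, inverted): (False,_) is u, (True,_) is v; second component True means inverse.\<close>

type_synonym letter = "bool \<times> bool"

definition inv_letter :: "letter \<Rightarrow> letter" where
  "inv_letter x = (fst x, \<not> snd x)"

fun push :: "letter \<Rightarrow> letter list \<Rightarrow> letter list" where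
  "push x [] = [x]"
| "push x (y # ys) = (if y = inv_letter x then ys else x # y # ys)"

definition fg_mult :: "letter list \<Rightarrow> letter list \<Rightarrow> letter list" where
  "fg_mult a b = foldr push a b"

definition reduced :: "letter list \<Rightarrow> bool" where
  "reduced w \<longleftrightarrow> (\<forall>i. Suc i < length w \<longrightarrow> w ! Suc i \<noteq> inv_letter (w ! i))"

text \<open>Group algebra A = C[F_2]: finitely supported complex functions on reduced words.\<close>
definition GA :: "(letter list \<Rightarrow> complex) set" where
  "GA = {f. finite {w. f w \<noteq> 0} \<and> (\<forall>w. f w \<noteq> 0 \<longrightarrow> reduced w)}"

definition conv :: "(letter list \<Rightarrow> complex) \<Rightarrow> (letter list \<Rightarrow> complex) \<Rightarrow> (letter list \<Rightarrow> complex)" where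
  "conv f g = (\<lambda>w. \<Sum>(x, y) \<in> {x. f x \<noteq> 0} \<times> {y. g y \<noteq> 0}.
                    if fg_mult x y = w then f x * g y else 0)"

definition delta :: "letter list \<Rightarrow> (letter list \<Rightarrow> complex)" where
  "delta w = (\<lambda>x. if x = w then 1 else 0)"

definition ga_pow :: "(letter list \<Rightarrow> complex) \<Rightarrow> nat \<Rightarrow> (letter list \<Rightarrow> complex)" where
  "ga_pow f n = (conv f ^^ n) (delta [])"

definition comm_space :: "(letter list \<Rightarrow> complex) set" where
  "comm_space = {f. \<exists>(n::nat) (c::nat \<Rightarrow> complex) F G. (\<forall>i<n. F i \<in> GA \<and> G i \<in> GA) \<and>
      f = (\<lambda>w. \<Sum>i<n. c i * (conv (F i) (G i) w - conv (G i) (F i) w))}"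

definition gen_u :: letter where "gen_u = (False, False)"
definition gen_v :: letter where "gen_v = (True, False)"

definition hh :: "letter list \<Rightarrow> complex" where
  "hh = (\<lambda>w. delta [gen_u] w + delta [gen_v] w + delta [inv_letter gen_u] w
            + delta [inv_letter gen_v] w + delta [inv_letter gen_u, inv_letter gen_v] w)"

end

theory Submission
  imports Defs "HOL-Computational_Algebra.Polynomial"
begin

text \<open>Every group homomorphism \<open>\<chi>\<close> from the free group to \<open>\<complex>\<^sup>*\<close> induces an algebra
homomorphism \<open>f \<mapsto> \<Sum>\<^sub>w f(w) \<chi>(w)\<close> from \<open>A\<close> to \<open>\<complex>\<close>, which, the target being commutative,
vanishes on \<open>[A,A]\<close>. For the character \<open>u \<mapsto> t, v \<mapsto> 1\<close> it sends \<open>h\<close> to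
\<open>r(t) = t + 2 + 2/t\<close>. So a relation \<open>\<Sum>\<^sub>k c\<^sub>k \<pi>(h\<^sup>k) = 0\<close> makes the polynomial
\<open>\<Sum>\<^sub>k c\<^sub>k X\<^sup>k\<close> vanish at every \<open>r(t)\<close>, \<open>t \<ge> 2\<close>; these are infinitely many points,
since \<open>r\<close> is injective there, so all \<open>c\<^sub>k\<close> vanish.\<close>

definition letter_char :: "complex \<Rightarrow> complex \<Rightarrow> letter \<Rightarrow> complex" where
  "letter_char a b l = (let z = if fst l then b else a in if snd l then inverse z else z)"

definition fg_char :: "complex \<Rightarrow> complex \<Rightarrow> letter list \<Rightarrow> complex" where
  "fg_char a b w = prod_list (map (letter_char a b) w)"

definition ga_eval :: "(letter list \<Rightarrow> complex) \<Rightarrow> (letter list \<Rightarrow> complex) \<Rightarrow> complex" where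
  "ga_eval \<chi> f = (\<Sum>w | f w \<noteq> 0. f w * \<chi> w)"

lemma letter_char_inv_letter:
  assumes "a \<noteq> 0" "b \<noteq> 0"
  shows "letter_char a b x * letter_char a b (inv_letter x) = 1"
  using assms by (simp add: letter_char_def inv_letter_def Let_def)

lemma fg_char_push:
  assumes "a \<noteq> 0" "b \<noteq> 0"
  shows "fg_char a b (push x ys) = letter_char a b x * fg_char a b ys"
proof (cases ys)
  case (Cons y ys')
  then show ?thesis
    using letter_char_inv_letter[OF assms, of x] by (auto simp: fg_char_def mult.assoc[symmetric])
qed (simp add: fg_char_def)

lemma fg_char_fg_mult:
  assumes "a \<noteq> 0" "b \<noteq> 0"
  shows "fg_char a b (fg_mult x y) = fg_char a b x * fg_char a b y"
  unfolding fg_mult_def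
  by (induction x) (simp_all add: fg_char_push[OF assms], simp_all add: fg_char_def)

lemma fg_char_Nil [simp]: "fg_char a b [] = 1"
  by (simp add: fg_char_def)

lemma ga_eval_eq_sum_superset:
  assumes "finite S" "{w. f w \<noteq> 0} \<subseteq> S"
  shows "ga_eval \<chi> f = (\<Sum>w\<in>S. f w * \<chi> w)"
  unfolding ga_eval_def by (rule sum.mono_neutral_left) (use assms in auto)

lemma supp_conv_subset:
  "{w. conv f g w \<noteq> 0} \<subseteq> (\<lambda>(x, y). fg_mult x y) ` ({x. f x \<noteq> 0} \<times> {y. g y \<noteq> 0})"
proof
  fix w assume "w \<in> {w. conv f g w \<noteq> 0}"
  then obtain p where "p \<in> {x. f x \<noteq> 0} \<times> {y. g y \<noteq> 0}"
    and "(case p of (x, y) \<Rightarrow> if fg_mult x y = w then f x * g y else 0) \<noteq> 0"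
    unfolding conv_def using sum.not_neutral_contains_not_neutral by blast
  then show "w \<in> (\<lambda>(x, y). fg_mult x y) ` ({x. f x \<noteq> 0} \<times> {y. g y \<noteq> 0})"
    by (cases p) (auto split: if_splits)
qed

lemma finite_supp_conv:
  "finite {x. f x \<noteq> 0} \<Longrightarrow> finite {y. g y \<noteq> 0} \<Longrightarrow> finite {w. conv f g w \<noteq> 0}"
  by (rule finite_subset[OF supp_conv_subset]) auto

lemma finite_supp_ga_pow:
  assumes "finite {w. f w \<noteq> 0}"
  shows "finite {w. ga_pow f k w \<noteq> 0}"
proof (induction k)
  case 0
  then show ?case by (simp add: ga_pow_def delta_def)
next
  case (Suc k)
  then show ?case by (simp add: ga_pow_def finite_supp_conv[OF assms])
qed

lemma ga_eval_conv:
  assumes mult: "\<And>x y. \<chi> (fg_mult x y) = \<chi> x * \<chi> y"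
    and fin: "finite {x. f x \<noteq> 0}" "finite {y. g y \<noteq> 0}"
  shows "ga_eval \<chi> (conv f g) = ga_eval \<chi> f * ga_eval \<chi> g"
proof -
  define P where "P = {x. f x \<noteq> 0} \<times> {y. g y \<noteq> 0}"
  define S where "S = (\<lambda>(x, y). fg_mult x y) ` P"
  have "finite P" "finite S" using fin by (simp_all add: P_def S_def)
  have term_sum: "(\<Sum>w\<in>S. (if fg_mult x y = w then f x * g y else 0) * \<chi> w)
      = (f x * \<chi> x) * (g y * \<chi> y)" if "(x, y) \<in> P" for x y
  proof -
    have "fg_mult x y \<in> S" using that by (force simp: S_def)
    moreover have "(if fg_mult x y = w then f x * g y else 0) * \<chi> w
        = (if fg_mult x y = w then f x * g y * \<chi> w else 0)" for w
      by simp
    ultimately show ?thesis using \<open>finite S\<close> by (simp add: sum.delta mult mult_ac)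
  qed
  have "ga_eval \<chi> (conv f g) = (\<Sum>w\<in>S. conv f g w * \<chi> w)"
    using supp_conv_subset \<open>finite S\<close> by (intro ga_eval_eq_sum_superset) (auto simp: S_def P_def)
  also have "\<dots> = (\<Sum>(x, y)\<in>P. \<Sum>w\<in>S. (if fg_mult x y = w then f x * g y else 0) * \<chi> w)"
    unfolding conv_def P_def[symmetric] sum_distrib_right by (subst sum.swap) (simp add: case_prod_beta)
  also have "\<dots> = (\<Sum>(x, y)\<in>P. (f x * \<chi> x) * (g y * \<chi> y))"
    by (rule sum.cong) (auto simp: term_sum)
  also have "\<dots> = ga_eval \<chi> f * ga_eval \<chi> g"
    unfolding ga_eval_def P_def sum_product sum.cartesian_product by simp
  finally show ?thesis .
qed

lemma ga_eval_ga_pow: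
  assumes "\<And>x y. \<chi> (fg_mult x y) = \<chi> x * \<chi> y" "\<chi> [] = 1" "finite {w. f w \<noteq> 0}"
  shows "ga_eval \<chi> (ga_pow f k) = ga_eval \<chi> f ^ k"
proof (induction k)
  case 0
  have "ga_eval \<chi> (delta []) = (\<Sum>w\<in>{[]}. delta [] w * \<chi> w)"
    by (rule ga_eval_eq_sum_superset) (auto simp: delta_def)
  then show ?case by (simp add: ga_pow_def delta_def assms(2))
next
  case (Suc k)
  then show ?case
    using ga_eval_conv[OF assms(1) assms(3) finite_supp_ga_pow[OF assms(3)]]
    by (simp add: ga_pow_def)
qed

lemma ga_eval_linear_combination:
  assumes "finite I" "\<And>i. i \<in> I \<Longrightarrow> finite {w. g i w \<noteq> 0}"
  shows "ga_eval \<chi> (\<lambda>w. \<Sum>i\<in>I. a i * g i w) = (\<Sum>i\<in>I. a i * ga_eval \<chi> (g i))"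
proof -
  define S where "S = (\<Union>i\<in>I. {w. g i w \<noteq> 0})"
  have "finite S" using assms by (simp add: S_def)
  have "{w. (\<Sum>i\<in>I. a i * g i w) \<noteq> 0} \<subseteq> S"
    using sum.not_neutral_contains_not_neutral by (fastforce simp: S_def)
  then have "ga_eval \<chi> (\<lambda>w. \<Sum>i\<in>I. a i * g i w) = (\<Sum>w\<in>S. (\<Sum>i\<in>I. a i * g i w) * \<chi> w)"
    by (rule ga_eval_eq_sum_superset[OF \<open>finite S\<close>])
  also have "\<dots> = (\<Sum>i\<in>I. a i * (\<Sum>w\<in>S. g i w * \<chi> w))"
    by (simp add: sum_distrib_right sum_distrib_left mult_ac sum.swap[of _ S])
  also have "\<dots> = (\<Sum>i\<in>I. a i * ga_eval \<chi> (g i))"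
    using \<open>finite S\<close> by (intro sum.cong refl, subst ga_eval_eq_sum_superset) (auto simp: S_def)
  finally show ?thesis .
qed

lemma ga_eval_diff:
  assumes "finite {w. f w \<noteq> 0}" "finite {w. g w \<noteq> 0}"
  shows "ga_eval \<chi> (\<lambda>w. f w - g w) = ga_eval \<chi> f - ga_eval \<chi> g"
proof -
  define S where "S = {w. f w \<noteq> 0} \<union> {w. g w \<noteq> 0}"
  have "finite S" using assms by (simp add: S_def)
  then have "ga_eval \<chi> (\<lambda>w. f w - g w) = (\<Sum>w\<in>S. (f w - g w) * \<chi> w)"
    by (rule ga_eval_eq_sum_superset) (auto simp: S_def)
  also have "\<dots> = (\<Sum>w\<in>S. f w * \<chi> w) - (\<Sum>w\<in>S. g w * \<chi> w)"
    by (simp add: left_diff_distrib sum_subtractf)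
  also have "\<dots> = ga_eval \<chi> f - ga_eval \<chi> g"
    using \<open>finite S\<close> by (subst (1 2) ga_eval_eq_sum_superset) (auto simp: S_def)
  finally show ?thesis .
qed

lemma ga_eval_commutator:
  assumes "\<And>x y. \<chi> (fg_mult x y) = \<chi> x * \<chi> y" "F \<in> GA" "G \<in> GA"
  shows "ga_eval \<chi> (\<lambda>w. conv F G w - conv G F w) = 0"
  using assms by (simp add: GA_def ga_eval_diff ga_eval_conv finite_supp_conv)

lemma ga_eval_comm_space:
  assumes mult: "\<And>x y. \<chi> (fg_mult x y) = \<chi> x * \<chi> y" and "f \<in> comm_space"
  shows "ga_eval \<chi> f = 0"
proof -
  obtain n :: nat and c :: "nat \<Rightarrow> complex" and F G
    where FG: "\<forall>i<n. F i \<in> GA \<and> G i \<in> GA"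
      and f: "f = (\<lambda>w. \<Sum>i<n. c i * (conv (F i) (G i) w - conv (G i) (F i) w))"
    using \<open>f \<in> comm_space\<close> unfolding comm_space_def by blast
  have "finite {w. conv (F i) (G i) w - conv (G i) (F i) w \<noteq> 0}" if "i < n" for i
  proof (rule finite_subset)
    show "finite ({w. conv (F i) (G i) w \<noteq> 0} \<union> {w. conv (G i) (F i) w \<noteq> 0})"
      using FG that by (simp add: GA_def finite_supp_conv)
  qed auto
  then have "ga_eval \<chi> f = (\<Sum>i<n. c i * ga_eval \<chi> (\<lambda>w. conv (F i) (G i) w - conv (G i) (F i) w))"
    unfolding f by (intro ga_eval_linear_combination) auto
  also have "\<dots> = 0"
    using FG by (simp add: ga_eval_commutator[OF mult])
  finally show ?thesis .
qed

lemma finite_supp_hh: "finite {w. hh w \<noteq> 0}"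
  by (rule finite_subset[of _ "{[gen_u], [gen_v], [inv_letter gen_u], [inv_letter gen_v],
      [inv_letter gen_u, inv_letter gen_v]}"]) (auto simp: hh_def delta_def)

lemma ga_eval_fg_char_hh:
  "ga_eval (fg_char a b) hh = a + b + inverse a + inverse b + inverse a * inverse b"
proof -
  have "ga_eval (fg_char a b) hh = (\<Sum>w\<in>{[gen_u], [gen_v], [inv_letter gen_u], [inv_letter gen_v],
      [inv_letter gen_u, inv_letter gen_v]}. hh w * fg_char a b w)"
    by (rule ga_eval_eq_sum_superset) (auto simp: hh_def delta_def)
  then show ?thesis
    by (simp add: hh_def delta_def gen_u_def gen_v_def inv_letter_def fg_char_def letter_char_def)
qed

lemma ga_eval_ga_pow_hh:
  assumes "t \<noteq> 0"
  shows "ga_eval (fg_char t 1) (ga_pow hh k) = (t + 2 + 2 / t) ^ k"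
proof -
  have "ga_eval (fg_char t 1) hh = t + 2 + 2 / t"
    by (simp add: ga_eval_fg_char_hh divide_inverse)
  then show ?thesis
    using assms by (simp add: ga_eval_ga_pow fg_char_fg_mult finite_supp_hh)
qed

lemma inj_on_plus_two_div: "inj_on (\<lambda>x::real. x + 2 + 2 / x) {2..}"
proof
  fix x y :: real assume "x \<in> {2..}" "y \<in> {2..}" and eq: "x + 2 + 2 / x = y + 2 + 2 / y"
  then have "(x - y) * (x * y - 2) = 0" by (simp add: field_simps)
  moreover have "x * y \<ge> 2 * 2"
    using \<open>x \<in> {2..}\<close> \<open>y \<in> {2..}\<close> by (intro mult_mono) auto
  ultimately show "x = y" by simp
qed

lemma infinite_range_plus_two_div:
  "infinite ((\<lambda>x::real. complex_of_real (x + 2 + 2 / x)) ` {2..})"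
proof -
  have "inj_on (complex_of_real \<circ> (\<lambda>x. x + 2 + 2 / x)) {2..}"
    by (rule comp_inj_on[OF inj_on_plus_two_div]) (simp add: inj_on_def)
  then show ?thesis
    using finite_imageD infinite_Ici by (auto simp: comp_def)
qed

lemma power_sum_coeffs_eq_zero:
  fixes c :: "nat \<Rightarrow> 'a::idom"
  assumes "finite K" "infinite S" "\<And>x. x \<in> S \<Longrightarrow> (\<Sum>k\<in>K. c k * x ^ k) = 0" "k \<in> K"
  shows "c k = 0"
proof -
  define p where "p = (\<Sum>j\<in>K. monom (c j) j)"
  have "S \<subseteq> {x. poly p x = 0}"
    using assms(3) by (auto simp: p_def poly_sum poly_monom)
  then have "p = 0"
    using assms(2) poly_roots_finite finite_subset by blast
  then have "coeff p k = 0" by simp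
  then show ?thesis
    using assms(1,4) by (simp add: p_def coeff_sum coeff_monom)
qed

theorem mainTheorem4:
  shows "\<forall>(n::nat) (c::nat \<Rightarrow> complex).
           (\<lambda>w. \<Sum>k\<in>{1..n}. c k * ga_pow hh k w) \<in> comm_space
           \<longrightarrow> (\<forall>k\<in>{1..n}. c k = 0)"
proof (intro allI impI ballI)
  fix n k and c :: "nat \<Rightarrow> complex"
  assume comm: "(\<lambda>w. \<Sum>k\<in>{1..n}. c k * ga_pow hh k w) \<in> comm_space" and "k \<in> {1..n}"
  have "(\<Sum>k\<in>{1..n}. c k * r ^ k) = 0"
    if r_in: "r \<in> (\<lambda>x::real. complex_of_real (x + 2 + 2 / x)) ` {2..}" for r
  proof -
    obtain x :: real where "x \<ge> 2" and "r = of_real (x + 2 + 2 / x)"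
      using r_in by blast
    then have r: "r = of_real x + 2 + 2 / of_real x" by simp
    have mult: "fg_char (of_real x) 1 (fg_mult y z) = fg_char (of_real x) 1 y * fg_char (of_real x) 1 z"
      for y z using \<open>x \<ge> 2\<close> by (simp add: fg_char_fg_mult)
    have "0 = ga_eval (fg_char (of_real x) 1) (\<lambda>w. \<Sum>k\<in>{1..n}. c k * ga_pow hh k w)"
      using ga_eval_comm_space[OF mult comm] by simp
    also have "\<dots> = (\<Sum>k\<in>{1..n}. c k * r ^ k)"
      using \<open>x \<ge> 2\<close> by (simp add: ga_eval_linear_combination finite_supp_ga_pow finite_supp_hh
          ga_eval_ga_pow_hh r)
    finally show ?thesis by simp
  qed
  then show "c k = 0"
    using power_sum_coeffs_eq_zero[OF _ infinite_range_plus_two_div] \<open>k \<in> {1..n}\<close> by blast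
qed

end
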